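(* Let $G=(V,E,L)$ be a graph with loops and let $V^+:=\{i\in V:\{i,i\}\in L^+\}$. If $V^+$ is a stable set of the graph $(V,E)$, then $\mathrm{QP}(G)$ is second-order cone (SOC) representable.
   Context: A graph with loops is a triple $G=(V,E,L)$ where $V$ is a finite node set, $E$ is a set of unordered pairs $\{i,j\}$ of distinct nodes, and $L$ is a set of loops, each written $\{i,i\}$ for some $i\in V$ (at most one per node), partitioned as $L=L^-\cup L^+$ into minus loops and plus loops. Define $$\mathrm{QP}(G):=\mathrm{conv}\Big\{z\in\mathbb{R}^{V\cup E\cup L}: z_{ii}\ge z_i^2\ \forall\{i,i\}\in L^+,\ z_{ii}\le z_i^2\ \forall \{i,i\}\in L^-,\ z_{ij}=z_iz_j\ \forall \{i,j\}\in E,\ z_i\in[0,1]\ \forall i\in V\Big\}.$$ A convex set is SOC-representable if it is the projection of a set (in a possibly higher-dimensional space) described by finitely many linear equalities/inequalities and (rotated) second-order cone constraints composed with affine maps. *)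

theory Defs
  imports "HOL-Analysis.Analysis"
begin

text \<open>Graph with loops G = (V, E, L), L = Lminus \<union> Lplus.  A loop {i,i} is identified
  with its node i; Lminus and Lplus are the node sets carrying a minus/plus loop.\<close>

definition graph_with_loops :: "'v set \<Rightarrow> 'v set set \<Rightarrow> 'v set \<Rightarrow> 'v set \<Rightarrow> bool" where
  "graph_with_loops V E Lminus Lplus \<longleftrightarrow>
     finite V \<and> (\<forall>e\<in>E. \<exists>i j. i \<in> V \<and> j \<in> V \<and> i \<noteq> j \<and> e = {i, j}) \<and>
     Lminus \<subseteq> V \<and> Lplus \<subseteq> V \<and> Lminus \<inter> Lplus = {}"

datatype 'v coord = Nd 'v | Ed "'v set" | Lp 'v

definition coords :: "'v set \<Rightarrow> 'v set set \<Rightarrow> 'v set \<Rightarrow> 'v set \<Rightarrow> 'v coord set" where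
  "coords V E Lminus Lplus = Nd ` V \<union> Ed ` E \<union> Lp ` (Lminus \<union> Lplus)"

text \<open>Points of R^I are functions vanishing outside the finite index set I.\<close>
definition supported_on :: "'i set \<Rightarrow> ('i \<Rightarrow> real) \<Rightarrow> bool" where
  "supported_on I z \<longleftrightarrow> (\<forall>i. i \<notin> I \<longrightarrow> z i = 0)"

definition conv_hull :: "('i \<Rightarrow> real) set \<Rightarrow> ('i \<Rightarrow> real) set" where
  "conv_hull X = {z. \<exists>(n::nat) (l::nat \<Rightarrow> real) (x::nat \<Rightarrow> 'i \<Rightarrow> real).
      (\<forall>t<n. 0 \<le> l t \<and> x t \<in> X) \<and> (\<Sum>t<n. l t) = 1 \<and> z = (\<lambda>i. \<Sum>t<n. l t * x t i)}"

definition QP_set :: "'v set \<Rightarrow> 'v set set \<Rightarrow> 'v set \<Rightarrow> 'v set \<Rightarrow> ('v coord \<Rightarrow> real) set" where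
  "QP_set V E Lminus Lplus = {z. supported_on (coords V E Lminus Lplus) z \<and>
      (\<forall>i\<in>Lplus. z (Lp i) \<ge> (z (Nd i))\<^sup>2) \<and>
      (\<forall>i\<in>Lminus. z (Lp i) \<le> (z (Nd i))\<^sup>2) \<and>
      (\<forall>e\<in>E. \<forall>i j. e = {i, j} \<and> i \<noteq> j \<longrightarrow> z (Ed e) = z (Nd i) * z (Nd j)) \<and>
      (\<forall>i\<in>V. 0 \<le> z (Nd i) \<and> z (Nd i) \<le> 1)}"

definition QP :: "'v set \<Rightarrow> 'v set set \<Rightarrow> 'v set \<Rightarrow> 'v set \<Rightarrow> ('v coord \<Rightarrow> real) set" where
  "QP V E Lminus Lplus = conv_hull (QP_set V E Lminus Lplus)"

text \<open>An affine functional on R^I \<times> R^k, given by coefficients (a, b, c):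
  (z, w) \<mapsto> \<Sum>i\<in>I. a i * z i + \<Sum>j<k. b j * w j + c.\<close>
type_synonym 'i affine_fn = "('i \<Rightarrow> real) \<times> (nat \<Rightarrow> real) \<times> real"

definition aff_eval :: "'i set \<Rightarrow> nat \<Rightarrow> 'i affine_fn \<Rightarrow> ('i \<Rightarrow> real) \<Rightarrow> (nat \<Rightarrow> real) \<Rightarrow> real" where
  "aff_eval I k f z w = (\<Sum>i\<in>I. fst f i * z i) + (\<Sum>j<k. fst (snd f) j * w j) + snd (snd f)"

text \<open>Linear inequalities (gs = []) and equalities (two inequalities) are special cases;
  rotated SOC constraints are SOC constraints composed with an affine map.\<close>
definition soc_holds :: "'i set \<Rightarrow> nat \<Rightarrow> ('i affine_fn list \<times> 'i affine_fn) \<Rightarrow> ('i \<Rightarrow> real) \<Rightarrow> (nat \<Rightarrow> real) \<Rightarrow> bool" where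
  "soc_holds I k C z w \<longleftrightarrow> sqrt (\<Sum>g\<leftarrow>fst C. (aff_eval I k g z w)\<^sup>2) \<le> aff_eval I k (snd C) z w"

definition soc_representable :: "'i set \<Rightarrow> ('i \<Rightarrow> real) set \<Rightarrow> bool" where
  "soc_representable I S \<longleftrightarrow>
     (\<exists>(k::nat) (Cs :: ('i affine_fn list \<times> 'i affine_fn) set). finite Cs \<and>
        S = {z. supported_on I z \<and> (\<exists>w. \<forall>C\<in>Cs. soc_holds I k C z w)})"

definition stable_set :: "'v set \<Rightarrow> 'v set set \<Rightarrow> 'v set \<Rightarrow> bool" where
  "stable_set V E S \<longleftrightarrow> S \<subseteq> V \<and> (\<forall>i\<in>S. \<forall>j\<in>S. {i, j} \<notin> E)"

end

theory Submission
  imports Defs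
begin

text \<open>Let \<open>N\<close> be the set of nodes without a plus loop. Rounding the \<open>N\<close>-coordinates of a point of
  \<open>QP_set\<close> independently at random (node \<open>n\<close> becomes 1 with probability \<open>z\<^sub>n\<close>) writes it as a
  convex combination of points of \<open>QP_set\<close> whose \<open>N\<close>-coordinates are 0/1. Fixing these
  coordinates to the indicator of some \<open>T \<subseteq> N\<close> makes every edge constraint linear, because the
  plus-loop nodes are stable; what remains are the convex constraints \<open>z\<^sub>p\<^sub>p \<ge> z\<^sub>p\<^sup>2\<close>.
  Hence \<open>QP(G)\<close> is the convex hull of finitely many convex pieces, and the usual disjunctive
  lifting over all \<open>T\<close>, with each piece homogenized into rotated second-order cones, represents
  it. Recession directions carried by pieces of weight zero (raising plus loops, lowering minus
  loops) are absorbed by the pieces of positive weight.\<close>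

section \<open>Second-order cone descriptions\<close>

definition affine_form :: "'i set \<Rightarrow> 'a set \<Rightarrow> (('i \<Rightarrow> real) \<Rightarrow> ('a \<Rightarrow> real) \<Rightarrow> real) \<Rightarrow> bool" where
  "affine_form I A \<phi> \<longleftrightarrow>
     (\<exists>a b c. \<forall>z u. \<phi> z u = (\<Sum>i\<in>I. a i * z i) + (\<Sum>x\<in>A. b x * u x) + c)"

lemma affine_form_const: "affine_form I A (\<lambda>z u. c)"
  unfolding affine_form_def by (rule exI[of _ "\<lambda>_. 0"], rule exI[of _ "\<lambda>_. 0"]) simp

lemma affine_form_fst_coord:
  assumes "finite I" "i \<in> I"
  shows "affine_form I A (\<lambda>z u. z i)"
  unfolding affine_form_def
  by (rule exI[of _ "\<lambda>j. of_bool (j = i)"], rule exI[of _ "\<lambda>_. 0"]) (simp add: assms)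

lemma affine_form_snd_coord:
  assumes "finite A" "x \<in> A"
  shows "affine_form I A (\<lambda>z u. u x)"
  unfolding affine_form_def
  by (rule exI[of _ "\<lambda>_. 0"], rule exI[of _ "\<lambda>y. of_bool (y = x)"]) (simp add: assms)

lemma affine_form_add:
  assumes "affine_form I A \<phi>" "affine_form I A \<psi>"
  shows "affine_form I A (\<lambda>z u. \<phi> z u + \<psi> z u)"
proof -
  obtain a b c where \<phi>: "\<And>z u. \<phi> z u = (\<Sum>i\<in>I. a i * z i) + (\<Sum>x\<in>A. b x * u x) + c"
    using assms(1) unfolding affine_form_def by blast
  obtain a' b' c' where \<psi>: "\<And>z u. \<psi> z u = (\<Sum>i\<in>I. a' i * z i) + (\<Sum>x\<in>A. b' x * u x) + c'"
    using assms(2) unfolding affine_form_def by blast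
  show ?thesis
    unfolding affine_form_def
    by (intro exI[of _ "\<lambda>i. a i + a' i"] exI[of _ "\<lambda>x. b x + b' x"] exI[of _ "c + c'"])
       (simp add: \<phi> \<psi> distrib_right sum.distrib)
qed

lemma affine_form_scale:
  assumes "affine_form I A \<phi>"
  shows "affine_form I A (\<lambda>z u. r * \<phi> z u)"
proof -
  obtain a b c where \<phi>: "\<And>z u. \<phi> z u = (\<Sum>i\<in>I. a i * z i) + (\<Sum>x\<in>A. b x * u x) + c"
    using assms unfolding affine_form_def by blast
  show ?thesis
    unfolding affine_form_def
    by (intro exI[of _ "\<lambda>i. r * a i"] exI[of _ "\<lambda>x. r * b x"] exI[of _ "r * c"])
       (simp add: \<phi> distrib_left sum_distrib_left mult.assoc)
qed

lemma affine_form_diff: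
  assumes "affine_form I A \<phi>" "affine_form I A \<psi>"
  shows "affine_form I A (\<lambda>z u. \<phi> z u - \<psi> z u)"
  using affine_form_add[OF assms(1) affine_form_scale[OF assms(2), of "-1"]] by simp

lemma affine_form_sum:
  assumes "finite S" "\<And>s. s \<in> S \<Longrightarrow> affine_form I A (\<phi> s)"
  shows "affine_form I A (\<lambda>z u. \<Sum>s\<in>S. \<phi> s z u)"
  using assms
proof (induction S rule: finite_induct)
  case empty
  show ?case using affine_form_const[of I A 0] by simp
next
  case (insert s S)
  then show ?case using affine_form_add[of I A "\<phi> s"] by simp
qed

lemmas affine_form_intros =
  affine_form_const affine_form_fst_coord affine_form_snd_coord
  affine_form_add affine_form_diff affine_form_scale affine_form_sum

type_synonym ('i, 'a) cone_constraint =
  "(('i \<Rightarrow> real) \<Rightarrow> ('a \<Rightarrow> real) \<Rightarrow> real) list \<times> (('i \<Rightarrow> real) \<Rightarrow> ('a \<Rightarrow> real) \<Rightarrow> real)"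

definition affine_constraint :: "'i set \<Rightarrow> 'a set \<Rightarrow> ('i, 'a) cone_constraint \<Rightarrow> bool" where
  "affine_constraint I A C \<longleftrightarrow> (\<forall>g\<in>set (fst C). affine_form I A g) \<and> affine_form I A (snd C)"

definition soc_constraint_holds :: "('i, 'a) cone_constraint \<Rightarrow> ('i \<Rightarrow> real) \<Rightarrow> ('a \<Rightarrow> real) \<Rightarrow> bool" where
  "soc_constraint_holds C z u \<longleftrightarrow> sqrt (\<Sum>g\<leftarrow>fst C. (g z u)\<^sup>2) \<le> snd C z u"

definition soc_describable :: "'i set \<Rightarrow> 'a set \<Rightarrow> (('i \<Rightarrow> real) \<Rightarrow> ('a \<Rightarrow> real) \<Rightarrow> bool) \<Rightarrow> bool" where
  "soc_describable I A P \<longleftrightarrow>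
     (\<exists>Cs. finite Cs \<and> (\<forall>C\<in>Cs. affine_constraint I A C) \<and>
        (\<forall>z u. P z u \<longleftrightarrow> (\<forall>C\<in>Cs. soc_constraint_holds C z u)))"

lemma soc_describable_single:
  assumes "\<forall>g\<in>set gs. affine_form I A g" "affine_form I A h"
    and "\<And>z u. P z u \<longleftrightarrow> sqrt (\<Sum>g\<leftarrow>gs. (g z u)\<^sup>2) \<le> h z u"
  shows "soc_describable I A P"
  unfolding soc_describable_def
  by (rule exI[of _ "{(gs, h)}"]) (simp add: assms soc_constraint_holds_def affine_constraint_def)

lemma soc_describable_nonneg:
  assumes "affine_form I A \<phi>"
  shows "soc_describable I A (\<lambda>z u. 0 \<le> \<phi> z u)"
  by (rule soc_describable_single[of "[]"]) (simp_all add: assms)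

lemma soc_describable_le:
  assumes "affine_form I A \<phi>" "affine_form I A \<psi>"
  shows "soc_describable I A (\<lambda>z u. \<phi> z u \<le> \<psi> z u)"
  using soc_describable_nonneg[OF affine_form_diff[OF assms(2,1)]] by simp

lemma soc_describable_conj:
  assumes "soc_describable I A P" "soc_describable I A Q"
  shows "soc_describable I A (\<lambda>z u. P z u \<and> Q z u)"
proof -
  obtain Cs where "finite Cs" "\<forall>C\<in>Cs. affine_constraint I A C"
    "\<And>z u. P z u \<longleftrightarrow> (\<forall>C\<in>Cs. soc_constraint_holds C z u)"
    using assms(1) unfolding soc_describable_def by blast
  moreover obtain Ds where "finite Ds" "\<forall>C\<in>Ds. affine_constraint I A C"
    "\<And>z u. Q z u \<longleftrightarrow> (\<forall>C\<in>Ds. soc_constraint_holds C z u)"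
    using assms(2) unfolding soc_describable_def by blast
  ultimately show ?thesis
    unfolding soc_describable_def by (intro exI[of _ "Cs \<union> Ds"]) auto
qed

lemma soc_describable_eq:
  assumes "affine_form I A \<phi>" "affine_form I A \<psi>"
  shows "soc_describable I A (\<lambda>z u. \<phi> z u = \<psi> z u)"
  using soc_describable_conj[OF soc_describable_le[OF assms] soc_describable_le[OF assms(2,1)]]
  by (simp add: order_eq_iff)

lemma soc_describable_ball:
  assumes "finite S" "\<And>s. s \<in> S \<Longrightarrow> soc_describable I A (P s)"
  shows "soc_describable I A (\<lambda>z u. \<forall>s\<in>S. P s z u)"
proof -
  have "\<forall>s\<in>S. \<exists>Cs. finite Cs \<and>
      (\<forall>C\<in>Cs. affine_constraint I A C) \<and>
      (\<forall>z u. P s z u \<longleftrightarrow> (\<forall>C\<in>Cs. soc_constraint_holds C z u))"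
    using assms(2) unfolding soc_describable_def by blast
  then obtain Cs where Cs: "\<forall>s\<in>S. finite (Cs s) \<and>
      (\<forall>C\<in>Cs s. affine_constraint I A C) \<and>
      (\<forall>z u. P s z u \<longleftrightarrow> (\<forall>C\<in>Cs s. soc_constraint_holds C z u))"
    by (rule bchoice[elim_format]) blast
  show ?thesis
    unfolding soc_describable_def
  proof (rule exI[of _ "\<Union>s\<in>S. Cs s"], intro conjI)
    show "finite (\<Union>s\<in>S. Cs s)"
      using assms(1) Cs by simp
    show "\<forall>C\<in>\<Union>s\<in>S. Cs s. affine_constraint I A C"
      using Cs by simp
    show "\<forall>z u. (\<forall>s\<in>S. P s z u) \<longleftrightarrow> (\<forall>C\<in>\<Union>s\<in>S. Cs s. soc_constraint_holds C z u)"
      using Cs by simp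
  qed
qed

definition rotated_cone :: "real \<Rightarrow> real \<Rightarrow> real \<Rightarrow> bool" where
  "rotated_cone x a b \<longleftrightarrow> x\<^sup>2 \<le> a * b \<and> 0 \<le> a \<and> 0 \<le> b"

lemma rotated_cone_scale:
  assumes "rotated_cone x a b" "0 \<le> r"
  shows "rotated_cone (r * x) (r * a) (r * b)"
proof -
  have "(r * x)\<^sup>2 = r\<^sup>2 * x\<^sup>2"
    by (simp add: power_mult_distrib)
  also have "\<dots> \<le> r\<^sup>2 * (a * b)"
    using assms by (simp add: rotated_cone_def mult_left_mono)
  also have "\<dots> = (r * a) * (r * b)"
    by (simp add: power2_eq_square algebra_simps)
  finally show ?thesis
    using assms by (simp add: rotated_cone_def)
qed

lemma rotated_cone_add:
  assumes "rotated_cone x1 a1 b1" "rotated_cone x2 a2 b2"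
  shows "rotated_cone (x1 + x2) (a1 + a2) (b1 + b2)"
proof -
  have "(x1 * x2)\<^sup>2 \<le> (a1 * b1) * (a2 * b2)"
    using assms unfolding power_mult_distrib rotated_cone_def by (intro mult_mono) auto
  then have "(2 * x1 * x2)\<^sup>2 \<le> 4 * ((a1 * b1) * (a2 * b2))"
    by (simp add: power_mult_distrib)
  also have "\<dots> \<le> (a1 * b2 + a2 * b1)\<^sup>2"
    using zero_le_power2[of "a1 * b2 - a2 * b1"] by (simp add: power2_eq_square algebra_simps)
  finally have "2 * x1 * x2 \<le> a1 * b2 + a2 * b1"
    by (rule power2_le_imp_le) (use assms in \<open>simp add: rotated_cone_def\<close>)
  then show ?thesis
    using assms unfolding rotated_cone_def by (simp add: power2_eq_square algebra_simps)
qed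

lemma rotated_cone_divide:
  assumes "rotated_cone x w y" "0 < w"
  shows "(x / w)\<^sup>2 \<le> y / w"
proof -
  have "(x / w)\<^sup>2 = x\<^sup>2 / w\<^sup>2"
    by (simp add: power_divide)
  also have "\<dots> \<le> (w * y) / w\<^sup>2"
    using assms by (intro divide_right_mono) (auto simp: rotated_cone_def)
  also have "\<dots> = y / w"
    using assms by (simp add: power2_eq_square)
  finally show ?thesis .
qed

lemma sqrt_le_iff_sq_le:
  fixes X y :: real
  assumes "0 \<le> X"
  shows "sqrt X \<le> y \<longleftrightarrow> X \<le> y\<^sup>2 \<and> 0 \<le> y"
proof
  assume le: "sqrt X \<le> y"
  have "0 \<le> sqrt X"
    using assms by simp
  then show "X \<le> y\<^sup>2 \<and> 0 \<le> y"
    using le sqrt_le_D[OF le] by linarith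
next
  assume "X \<le> y\<^sup>2 \<and> 0 \<le> y"
  then show "sqrt X \<le> y"
    using real_le_lsqrt by blast
qed

lemma rotated_soc_iff:
  "sqrt ((2 * x)\<^sup>2 + (a - b)\<^sup>2) \<le> a + b \<longleftrightarrow> rotated_cone x a b"
proof -
  have "sqrt ((2 * x)\<^sup>2 + (a - b)\<^sup>2) \<le> a + b \<longleftrightarrow> (2 * x)\<^sup>2 + (a - b)\<^sup>2 \<le> (a + b)\<^sup>2 \<and> 0 \<le> a + b"
    by (rule sqrt_le_iff_sq_le) simp
  also have "\<dots> \<longleftrightarrow> x\<^sup>2 \<le> a * b \<and> 0 \<le> a + b"
  proof -
    have "(a + b)\<^sup>2 - ((2 * x)\<^sup>2 + (a - b)\<^sup>2) = 4 * (a * b - x\<^sup>2)"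
      by (simp add: power2_eq_square algebra_simps)
    then show ?thesis
      by auto
  qed
  also have "\<dots> \<longleftrightarrow> rotated_cone x a b"
  proof -
    have "0 \<le> a \<and> 0 \<le> b" if "0 \<le> a * b" "0 \<le> a + b"
      using that by (auto simp: zero_le_mult_iff)
    then show ?thesis
      unfolding rotated_cone_def using order_trans[OF zero_le_power2[of x]] by auto
  qed
  finally show ?thesis .
qed

lemma soc_describable_rotated_cone:
  assumes "affine_form I A x" "affine_form I A a" "affine_form I A b"
  shows "soc_describable I A (\<lambda>z u. rotated_cone (x z u) (a z u) (b z u))"
proof (rule soc_describable_single)
  show "\<forall>g\<in>set [\<lambda>z u. 2 * x z u, \<lambda>z u. a z u - b z u]. affine_form I A g"
    using assms by (simp add: affine_form_scale affine_form_diff)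
  show "affine_form I A (\<lambda>z u. a z u + b z u)"
    using assms(2,3) by (rule affine_form_add)
  show "rotated_cone (x z u) (a z u) (b z u) \<longleftrightarrow>
      sqrt (\<Sum>g\<leftarrow>[\<lambda>z u. 2 * x z u, \<lambda>z u. a z u - b z u]. (g z u)\<^sup>2) \<le> a z u + b z u" for z u
    using rotated_soc_iff[of "x z u" "a z u" "b z u"] by simp
qed

lemmas soc_describable_intros =
  soc_describable_rotated_cone soc_describable_conj soc_describable_ball
  soc_describable_le soc_describable_eq

lemma affine_form_aff_eval:
  fixes I :: "'i set"
  assumes "affine_form I A \<phi>" "bij_betw h {..<k} A"
  obtains f :: "'i affine_fn" where "\<And>z u w. \<forall>j<k. w j = u (h j) \<Longrightarrow> aff_eval I k f z w = \<phi> z u"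
proof -
  obtain a b c where \<phi>: "\<And>z u. \<phi> z u = (\<Sum>i\<in>I. a i * z i) + (\<Sum>x\<in>A. b x * u x) + c"
    using assms(1) unfolding affine_form_def by blast
  show thesis
  proof (rule that[of "(a, \<lambda>j. b (h j), c)"])
    fix z u and w :: "nat \<Rightarrow> real"
    assume "\<forall>j<k. w j = u (h j)"
    then have "(\<Sum>j<k. b (h j) * w j) = (\<Sum>j<k. b (h j) * u (h j))"
      by simp
    also have "\<dots> = (\<Sum>x\<in>A. b x * u x)"
      using sum.reindex_bij_betw[OF assms(2), of "\<lambda>x. b x * u x"] .
    finally show "aff_eval I k (a, \<lambda>j. b (h j), c) z w = \<phi> z u"
      by (simp add: aff_eval_def \<phi>)
  qed
qed

lemma soc_constraint_encode:
  fixes I :: "'i set"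
  assumes "affine_constraint I A C" "bij_betw h {..<k} A"
  obtains C' :: "'i affine_fn list \<times> 'i affine_fn"
  where "\<And>z u w. \<forall>j<k. w j = u (h j) \<Longrightarrow> soc_holds I k C' z w \<longleftrightarrow> soc_constraint_holds C z u"
proof -
  define encode :: "_ \<Rightarrow> 'i affine_fn" where
    "encode \<phi> = (SOME f. \<forall>z u w. (\<forall>j<k. w j = u (h j)) \<longrightarrow> aff_eval I k f z w = \<phi> z u)" for \<phi>
  have encode: "aff_eval I k (encode \<phi>) z w = \<phi> z u"
    if aff: "affine_form I A \<phi>" and agree: "\<forall>j<k. w j = u (h j)" for \<phi> z w u
  proof -
    obtain f :: "'i affine_fn" where "\<forall>z u w. (\<forall>j<k. w j = u (h j)) \<longrightarrow> aff_eval I k f z w = \<phi> z u"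
      using affine_form_aff_eval[OF aff assms(2)] by metis
    then have "\<forall>z u w. (\<forall>j<k. w j = u (h j)) \<longrightarrow> aff_eval I k (encode \<phi>) z w = \<phi> z u"
      unfolding encode_def by (rule someI)
    then show ?thesis
      using agree by blast
  qed
  show thesis
  proof (rule that[of "(map encode (fst C), encode (snd C))"])
    fix z u and w :: "nat \<Rightarrow> real"
    assume agree: "\<forall>j<k. w j = u (h j)"
    show "soc_holds I k (map encode (fst C), encode (snd C)) z w \<longleftrightarrow> soc_constraint_holds C z u"
      using assms(1) encode[OF _ agree] unfolding soc_holds_def soc_constraint_holds_def affine_constraint_def
      by (simp add: comp_def cong: map_cong)
  qed
qed

lemma soc_representable_if_describable:
  fixes I :: "'i set"
  assumes "finite A" "soc_describable I A P"
  shows "soc_representable I {z. supported_on I z \<and> (\<exists>u. P z u)}"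
proof -
  obtain Cs where "finite Cs" and Cs_affine: "\<And>C. C \<in> Cs \<Longrightarrow> affine_constraint I A C"
    and P: "\<And>z u. P z u \<longleftrightarrow> (\<forall>C\<in>Cs. soc_constraint_holds C z u)"
    using assms(2) unfolding soc_describable_def by blast
  define k where "k = card A"
  obtain h where h: "bij_betw h {..<k} A"
    using ex_bij_betw_nat_finite[OF assms(1)] by (auto simp: k_def atLeast0LessThan)
  have "\<forall>C\<in>Cs. \<exists>C' :: 'i affine_fn list \<times> 'i affine_fn.
      \<forall>z u w. (\<forall>j<k. w j = u (h j)) \<longrightarrow> soc_holds I k C' z w = soc_constraint_holds C z u"
    using soc_constraint_encode[OF Cs_affine h] by metis
  then obtain encode where holds_iff: "\<And>C z u w. C \<in> Cs \<Longrightarrow> \<forall>j<k. w j = u (h j) \<Longrightarrow>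
      soc_holds I k (encode C) z w \<longleftrightarrow> soc_constraint_holds C z u"
    by (metis bchoice)
  have "(\<exists>u. P z u) \<longleftrightarrow> (\<exists>w. \<forall>C\<in>encode ` Cs. soc_holds I k C z w)" for z
  proof
    assume "\<exists>u. P z u"
    then obtain u where "P z u" ..
    then have "\<forall>C\<in>encode ` Cs. soc_holds I k C z (\<lambda>j. u (h j))"
      using holds_iff[of _ "\<lambda>j. u (h j)" u] by (simp add: P)
    then show "\<exists>w. \<forall>C\<in>encode ` Cs. soc_holds I k C z w"
      by blast
  next
    assume "\<exists>w. \<forall>C\<in>encode ` Cs. soc_holds I k C z w"
    then obtain w where w: "\<forall>C\<in>encode ` Cs. soc_holds I k C z w" ..
    have agree: "\<forall>j<k. w j = (\<lambda>x. w (inv_into {..<k} h x)) (h j)"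
      using h by (simp add: bij_betw_def)
    have "P z (\<lambda>x. w (inv_into {..<k} h x))"
      using w holds_iff[OF _ agree] by (simp add: P)
    then show "\<exists>u. P z u"
      by blast
  qed
  then show ?thesis
    unfolding soc_representable_def using \<open>finite Cs\<close>
    by (intro exI[of _ k] exI[of _ "encode ` Cs"]) auto
qed

section \<open>Convex combinations and product weights\<close>

lemma conv_hullE:
  assumes "z \<in> conv_hull X"
  obtains n :: nat and l x where "\<forall>t<n. 0 \<le> l t \<and> x t \<in> X" "(\<Sum>t<n. l t) = 1" "z = (\<lambda>i. \<Sum>t<n. l t * x t i)"
  using assms unfolding conv_hull_def by blast

lemma conv_hull_sum:
  assumes "finite F" "\<And>t. t \<in> F \<Longrightarrow> 0 \<le> l t" "\<And>t. t \<in> F \<Longrightarrow> x t \<in> X" "(\<Sum>t\<in>F. l t) = 1"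
  shows "(\<lambda>i. \<Sum>t\<in>F. l t * x t i) \<in> conv_hull X"
proof -
  obtain h where h: "bij_betw h {..<card F} F"
    using ex_bij_betw_nat_finite[OF assms(1)] by (auto simp: atLeast0LessThan)
  have reindex: "(\<Sum>j<card F. g (h j)) = (\<Sum>t\<in>F. g t)" for g :: "_ \<Rightarrow> real"
    by (rule sum.reindex_bij_betw[OF h])
  have "h j \<in> F" if "j < card F" for j
    using h that by (auto simp: bij_betw_def)
  moreover have "(\<Sum>j<card F. l (h j)) = 1"
    using assms(4) by (simp add: reindex)
  moreover have "(\<lambda>i. \<Sum>t\<in>F. l t * x t i) = (\<lambda>i. \<Sum>j<card F. l (h j) * x (h j) i)"
    by (rule ext, rule reindex[symmetric])
  ultimately show ?thesis
    unfolding conv_hull_def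
    by (intro CollectI exI[of _ "card F"] exI[of _ "l \<circ> h"] exI[of _ "x \<circ> h"]) (simp add: assms)
qed

lemma conv_hull_supported_on:
  assumes "\<And>x. x \<in> X \<Longrightarrow> supported_on I x" "z \<in> conv_hull X"
  shows "supported_on I z"
proof -
  obtain n :: nat and l x where "\<forall>t<n. 0 \<le> l t \<and> x t \<in> X" "z = (\<lambda>i. \<Sum>t<n. l t * x t i)"
    using assms(2) by (rule conv_hullE)
  then show ?thesis
    using assms(1) unfolding supported_on_def by (auto intro!: sum.neutral)
qed

definition prod_weight :: "'a set \<Rightarrow> ('a \<Rightarrow> real) \<Rightarrow> 'a set \<Rightarrow> real" where
  "prod_weight N a T = (\<Prod>m\<in>T. a m) * (\<Prod>m\<in>N - T. 1 - a m)"

lemma prod_weight_nonneg: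
  assumes "\<And>m. m \<in> N \<Longrightarrow> 0 \<le> a m \<and> a m \<le> 1" "T \<subseteq> N"
  shows "0 \<le> prod_weight N a T"
  unfolding prod_weight_def using assms by (intro mult_nonneg_nonneg prod_nonneg) auto

lemma sum_prod_weight_superset:
  assumes "finite N" "S \<subseteq> N"
  shows "(\<Sum>T\<in>Pow N. prod_weight N a T * of_bool (S \<subseteq> T)) = (\<Prod>m\<in>S. a m)"
proof -
  define b where "b m = of_bool (m \<notin> S) * (1 - a m)" for m
  have "prod_weight N a T * of_bool (S \<subseteq> T) = (\<Prod>m\<in>T. a m) * (\<Prod>m\<in>N - T. b m)" if "T \<subseteq> N" for T
  proof (cases "S \<subseteq> T")
    case True
    then have "(\<Prod>m\<in>N - T. b m) = (\<Prod>m\<in>N - T. 1 - a m)"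
      by (intro prod.cong) (auto simp: b_def)
    with True show ?thesis
      by (simp add: prod_weight_def)
  next
    case False
    then obtain m where "m \<in> N - T" "b m = 0"
      using assms(2) by (auto simp: b_def)
    then have "(\<Prod>m\<in>N - T. b m) = 0"
      using assms(1) by (intro prod_zero) auto
    with False show ?thesis
      by simp
  qed
  then have "(\<Sum>T\<in>Pow N. prod_weight N a T * of_bool (S \<subseteq> T)) = (\<Prod>m\<in>N. a m + b m)"
    using assms(1) by (simp add: prod_add)
  also have "\<dots> = (\<Prod>m\<in>N. if m \<in> S then a m else 1)"
    by (intro prod.cong) (auto simp: b_def)
  also have "\<dots> = (\<Prod>m\<in>S. a m)"
    using assms by (simp add: prod.If_cases Int_absorb1)
  finally show ?thesis .
qed

lemma sum_prod_weight:
  assumes "finite N"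
  shows "(\<Sum>T\<in>Pow N. prod_weight N a T) = 1"
  using sum_prod_weight_superset[OF assms, of "{}" a] by simp

section \<open>Points of QP and rounding of the nodes without plus loops\<close>

lemma mem_coords [simp]:
  "Nd i \<in> coords V E Lminus Lplus \<longleftrightarrow> i \<in> V"
  "Ed e \<in> coords V E Lminus Lplus \<longleftrightarrow> e \<in> E"
  "Lp i \<in> coords V E Lminus Lplus \<longleftrightarrow> i \<in> Lminus \<union> Lplus"
  unfolding coords_def by auto

lemma QP_setD:
  assumes "y \<in> QP_set V E Lminus Lplus"
  shows "supported_on (coords V E Lminus Lplus) y"
    and "\<And>p. p \<in> Lplus \<Longrightarrow> (y (Nd p))\<^sup>2 \<le> y (Lp p)"
    and "\<And>n. n \<in> Lminus \<Longrightarrow> y (Lp n) \<le> (y (Nd n))\<^sup>2"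
    and "\<And>e i j. e \<in> E \<Longrightarrow> e = {i, j} \<Longrightarrow> i \<noteq> j \<Longrightarrow> y (Ed e) = y (Nd i) * y (Nd j)"
    and "\<And>i. i \<in> V \<Longrightarrow> 0 \<le> y (Nd i)"
    and "\<And>i. i \<in> V \<Longrightarrow> y (Nd i) \<le> 1"
  using assms unfolding QP_set_def by auto

lemma QP_set_add_recession:
  assumes "y \<in> QP_set V E Lminus Lplus" "supported_on (coords V E Lminus Lplus) d"
    and "\<And>i. d (Nd i) = 0" "\<And>e. d (Ed e) = 0"
    and "\<And>n. n \<in> Lminus \<Longrightarrow> d (Lp n) \<le> 0" "\<And>p. p \<in> Lplus \<Longrightarrow> 0 \<le> d (Lp p)"
  shows "(\<lambda>c. y c + d c) \<in> QP_set V E Lminus Lplus"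
  using assms unfolding QP_set_def supported_on_def by (auto intro: add_increasing2 add_decreasing2)

locale loop_graph =
  fixes V :: "'v set" and E :: "'v set set" and Lminus Lplus :: "'v set"
  assumes graph: "graph_with_loops V E Lminus Lplus"
begin

abbreviation N :: "'v set" where "N \<equiv> V - Lplus"

abbreviation I :: "'v coord set" where "I \<equiv> coords V E Lminus Lplus"

lemma finite_V: "finite V"
  using graph unfolding graph_with_loops_def by blast

lemma finite_N: "finite N"
  using finite_V by simp

lemma edgeE:
  assumes "e \<in> E"
  obtains i j where "i \<in> V" "j \<in> V" "i \<noteq> j" "e = {i, j}"
  using graph assms unfolding graph_with_loops_def by blast

lemma edge_subset_V: "e \<in> E \<Longrightarrow> e \<subseteq> V"
  by (auto elim: edgeE)

lemma finite_E: "finite E"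
proof (rule finite_subset)
  show "E \<subseteq> Pow V"
    using edge_subset_V by blast
  show "finite (Pow V)"
    using finite_V by simp
qed

lemma Lminus_subset_N: "Lminus \<subseteq> N"
  using graph unfolding graph_with_loops_def by blast

lemma Lplus_subset_V: "Lplus \<subseteq> V"
  using graph unfolding graph_with_loops_def by blast

lemma finite_I: "finite I"
proof -
  have "finite (Lminus \<union> Lplus)"
    using Lminus_subset_N Lplus_subset_V finite_V by (simp add: finite_subset)
  then show ?thesis
    unfolding coords_def using finite_V finite_E by simp
qed

definition rounded_monomial :: "'v set \<Rightarrow> ('v coord \<Rightarrow> real) \<Rightarrow> 'v set \<Rightarrow> real" where
  "rounded_monomial T y S = of_bool (S - Lplus \<subseteq> T) * (\<Prod>p\<in>S \<inter> Lplus. y (Nd p))"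

definition rounded :: "'v set \<Rightarrow> ('v coord \<Rightarrow> real) \<Rightarrow> 'v coord \<Rightarrow> real" where
  "rounded T y c = (if c \<notin> I then 0 else case c of
       Nd i \<Rightarrow> rounded_monomial T y {i}
     | Ed e \<Rightarrow> rounded_monomial T y e
     | Lp i \<Rightarrow> y (Lp i) + rounded_monomial T y {i} - y (Nd i))"

lemma rounded_monomial_singleton:
  "rounded_monomial T y {i} = (if i \<in> Lplus then y (Nd i) else of_bool (i \<in> T))"
  unfolding rounded_monomial_def by auto

lemma rounded_monomial_union:
  assumes "finite A" "finite B" "A \<inter> B = {}"
  shows "rounded_monomial T y (A \<union> B) = rounded_monomial T y A * rounded_monomial T y B"
proof -
  have "(\<Prod>p\<in>(A \<union> B) \<inter> Lplus. y (Nd p)) = (\<Prod>p\<in>A \<inter> Lplus. y (Nd p)) * (\<Prod>p\<in>B \<inter> Lplus. y (Nd p))"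
    using assms by (simp add: Int_Un_distrib2 prod.union_disjoint disjoint_iff)
  then show ?thesis
    unfolding rounded_monomial_def by auto
qed

lemma rounded_in_QP_set:
  assumes y: "y \<in> QP_set V E Lminus Lplus"
  shows "rounded T y \<in> QP_set V E Lminus Lplus"
  unfolding QP_set_def mem_Collect_eq
proof (intro conjI ballI allI impI)
  show "supported_on I (rounded T y)"
    unfolding supported_on_def rounded_def by simp
  show "(rounded T y (Nd p))\<^sup>2 \<le> rounded T y (Lp p)" if p: "p \<in> Lplus" for p
    using p Lplus_subset_V QP_setD(2)[OF y p] unfolding rounded_def rounded_monomial_singleton by auto
  show "rounded T y (Lp n) \<le> (rounded T y (Nd n))\<^sup>2" if n: "n \<in> Lminus" for n
  proof -
    have "n \<in> N"
      using n Lminus_subset_N by blast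
    moreover have "y (Lp n) \<le> (y (Nd n))\<^sup>2"
      using QP_setD(3)[OF y n] .
    moreover have "(y (Nd n))\<^sup>2 \<le> y (Nd n)"
      using QP_setD(5,6)[OF y, of n] \<open>n \<in> N\<close> by (simp add: power2_eq_square mult_left_le)
    ultimately show ?thesis
      unfolding rounded_def rounded_monomial_singleton by simp
  qed
  show "rounded T y (Ed e) = rounded T y (Nd i) * rounded T y (Nd j)"
    if "e \<in> E" "e = {i, j} \<and> i \<noteq> j" for e i j
  proof -
    have "i \<in> V" "j \<in> V"
      using that edge_subset_V by blast+
    moreover have "rounded_monomial T y ({i} \<union> {j}) = rounded_monomial T y {i} * rounded_monomial T y {j}"
      using that by (intro rounded_monomial_union) auto
    moreover have "e = {i} \<union> {j}"
      using that by blast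
    ultimately show ?thesis
      using that unfolding rounded_def by simp
  qed
  show "0 \<le> rounded T y (Nd i)" "rounded T y (Nd i) \<le> 1" if "i \<in> V" for i
    using that QP_setD(5,6)[OF y, of i] unfolding rounded_def rounded_monomial_singleton by simp_all
qed

lemma rounded_Nd_N:
  assumes "n \<in> N"
  shows "rounded T y (Nd n) = of_bool (n \<in> T)"
  using assms unfolding rounded_def rounded_monomial_singleton by simp

lemma sum_prod_weight_rounded_monomial:
  assumes "finite S" "S \<subseteq> V"
  shows "(\<Sum>T\<in>Pow N. prod_weight N (\<lambda>m. y (Nd m)) T * rounded_monomial T y S) = (\<Prod>m\<in>S. y (Nd m))"
proof -
  have "(\<Sum>T\<in>Pow N. prod_weight N (\<lambda>m. y (Nd m)) T * rounded_monomial T y S) =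
      (\<Sum>T\<in>Pow N. prod_weight N (\<lambda>m. y (Nd m)) T * of_bool (S - Lplus \<subseteq> T)) * (\<Prod>p\<in>S \<inter> Lplus. y (Nd p))"
    unfolding rounded_monomial_def by (simp add: sum_distrib_right mult.assoc)
  also have "\<dots> = (\<Prod>m\<in>S - Lplus. y (Nd m)) * (\<Prod>p\<in>S \<inter> Lplus. y (Nd p))"
    using assms(2) by (subst sum_prod_weight_superset) (auto simp: finite_N)
  also have "\<dots> = (\<Prod>m\<in>(S - Lplus) \<union> (S \<inter> Lplus). y (Nd m))"
    using assms(1) by (intro prod.union_disjoint[symmetric]) auto
  also have "\<dots> = (\<Prod>m\<in>S. y (Nd m))"
    by (simp add: Un_Diff_Int)
  finally show ?thesis .
qed

lemma sum_prod_weight_rounded: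
  assumes y: "y \<in> QP_set V E Lminus Lplus" and c: "c \<in> I"
  shows "(\<Sum>T\<in>Pow N. prod_weight N (\<lambda>m. y (Nd m)) T * rounded T y c) = y c"
proof -
  let ?w = "prod_weight N (\<lambda>m. y (Nd m))"
  have monomial: "(\<Sum>T\<in>Pow N. ?w T * rounded_monomial T y S) = (\<Prod>m\<in>S. y (Nd m))"
    if "finite S" "S \<subseteq> V" for S
    using that by (rule sum_prod_weight_rounded_monomial)
  show ?thesis
  proof (cases c)
    case (Nd i)
    then show ?thesis
      using c monomial[of "{i}"] by (simp add: rounded_def)
  next
    case (Ed e)
    then obtain i j where "i \<in> V" "j \<in> V" "i \<noteq> j" "e = {i, j}"
      using c by (auto elim: edgeE)
    then show ?thesis
      using Ed c monomial[of e] QP_setD(4)[OF y] by (simp add: rounded_def)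
  next
    case (Lp i)
    then have "i \<in> V"
      using c Lminus_subset_N Lplus_subset_V by auto
    have "(\<Sum>T\<in>Pow N. ?w T * rounded T y c) =
        (y (Lp i) - y (Nd i)) * (\<Sum>T\<in>Pow N. ?w T) + (\<Sum>T\<in>Pow N. ?w T * rounded_monomial T y {i})"
      using Lp c by (simp add: rounded_def algebra_simps sum.distrib sum_distrib_left sum_subtractf)
    then show ?thesis
      using sum_prod_weight[OF finite_N] monomial[of "{i}"] \<open>i \<in> V\<close> Lp by simp
  qed
qed

end

section \<open>Disjunctive lifting\<close>

locale plus_stable_graph = loop_graph V E Lminus Lplus
  for V :: "'v set" and E :: "'v set set" and Lminus Lplus :: "'v set" +
  assumes stable: "stable_set V E Lplus"
begin

lemma edge_cases:
  assumes "e \<in> E" "e = {i, j}" "i \<noteq> j"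
  obtains "i \<in> N" "j \<in> N" "e \<inter> Lplus = {}"
    | "i \<in> Lplus" "j \<in> N" "e \<inter> Lplus = {i}"
    | "j \<in> Lplus" "i \<in> N" "e \<inter> Lplus = {j}"
proof -
  have "i \<in> V" "j \<in> V"
    using assms edge_subset_V by blast+
  moreover have "\<not> (i \<in> Lplus \<and> j \<in> Lplus)"
    using stable assms unfolding stable_set_def by blast
  ultimately show ?thesis
    using that assms by blast
qed

text \<open>For \<open>w > 0\<close>, \<open>piece_cone T w v\<close> says that \<open>v / w\<close> lies in \<open>QP_set\<close> with the nodes of \<open>N\<close>
  fixed to the indicator of \<open>T\<close>; for \<open>w = 0\<close>, that \<open>v\<close> is a recession direction of these points.
  Since \<open>Lplus\<close> is stable, every edge then has at most one free endpoint, so its constraint is linear.\<close>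

definition piece_cone :: "'v set \<Rightarrow> real \<Rightarrow> ('v coord \<Rightarrow> real) \<Rightarrow> bool" where
  "piece_cone T w v \<longleftrightarrow>
     0 \<le> w \<and>
     (\<forall>n\<in>N. v (Nd n) = of_bool (n \<in> T) * w) \<and>
     (\<forall>p\<in>Lplus. 0 \<le> v (Nd p) \<and> v (Nd p) \<le> w) \<and>
     (\<forall>e\<in>{e\<in>E. e \<inter> Lplus = {}}. v (Ed e) = of_bool (e \<subseteq> T) * w) \<and>
     (\<forall>e\<in>E. \<forall>p\<in>e \<inter> Lplus. v (Ed e) = of_bool (e - {p} \<subseteq> T) * v (Nd p)) \<and>
     (\<forall>n\<in>Lminus. v (Lp n) \<le> of_bool (n \<in> T) * w) \<and>
     (\<forall>p\<in>Lplus. rotated_cone (v (Nd p)) w (v (Lp p)))"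

lemma piece_cone_zero: "piece_cone T 0 (\<lambda>_. 0)"
  unfolding piece_cone_def rotated_cone_def by simp

lemma piece_cone_scale:
  assumes "piece_cone T w v" "0 \<le> r"
  shows "piece_cone T (r * w) (\<lambda>c. r * v c)"
  using assms rotated_cone_scale unfolding piece_cone_def by (auto simp: mult_left_mono mult.left_commute)

lemma piece_cone_add:
  assumes "piece_cone T w1 v1" "piece_cone T w2 v2"
  shows "piece_cone T (w1 + w2) (\<lambda>c. v1 c + v2 c)"
proof -
  have "v1 (Lp n) + v2 (Lp n) \<le> of_bool (n \<in> T) * (w1 + w2)" if "n \<in> Lminus" for n
    using assms that unfolding piece_cone_def distrib_left by (intro add_mono) auto
  then show ?thesis
    using assms rotated_cone_add unfolding piece_cone_def by (auto simp: distrib_left intro: add_mono)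
qed

lemma piece_cone_sum:
  assumes "finite F" "\<And>t. t \<in> F \<Longrightarrow> piece_cone T (w t) (v t)"
  shows "piece_cone T (\<Sum>t\<in>F. w t) (\<lambda>c. \<Sum>t\<in>F. v t c)"
  using assms
proof (induction F rule: finite_induct)
  case empty
  show ?case
    using piece_cone_zero by simp
next
  case (insert t F)
  then show ?case
    using piece_cone_add[of T "w t" "v t"] by simp
qed

lemma piece_cone_of_QP_set:
  assumes y: "y \<in> QP_set V E Lminus Lplus" and T: "\<And>n. n \<in> N \<Longrightarrow> y (Nd n) = of_bool (n \<in> T)"
  shows "piece_cone T 1 y"
  unfolding piece_cone_def
proof (intro conjI ballI)
  show "0 \<le> (1::real)"
    by simp
  show "y (Nd n) = of_bool (n \<in> T) * 1" if "n \<in> N" for n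
    using T[OF that] by simp
  show "0 \<le> y (Nd p)" "y (Nd p) \<le> 1" if "p \<in> Lplus" for p
    using that Lplus_subset_V QP_setD(5,6)[OF y] by blast+
  show "y (Ed e) = of_bool (e \<subseteq> T) * 1" if "e \<in> {e \<in> E. e \<inter> Lplus = {}}" for e
  proof -
    from that have "e \<in> E"
      by simp
    then obtain i j where "i \<in> V" "j \<in> V" "i \<noteq> j" "e = {i, j}"
      by (rule edgeE)
    with that show ?thesis
      using QP_setD(4)[OF y] T[of i] T[of j] by auto
  qed
  show "y (Ed e) = of_bool (e - {p} \<subseteq> T) * y (Nd p)" if e: "e \<in> E" and p: "p \<in> e \<inter> Lplus" for e p
  proof -
    obtain i j where "i \<in> V" "j \<in> V" "i \<noteq> j" "e = {i, j}"
      using e by (rule edgeE)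
    then have "\<exists>k. e = {p, k} \<and> p \<noteq> k"
      using p by (auto simp: insert_commute)
    then obtain k where k: "e = {p, k}" "p \<noteq> k"
      by blast
    from e k have "k \<in> N" "e - {p} = {k}"
      by (cases rule: edge_cases) (use p k in auto)
    then show ?thesis
      using QP_setD(4)[OF y e k] T[of k] by (simp add: mult.commute)
  qed
  show "y (Lp n) \<le> of_bool (n \<in> T) * 1" if "n \<in> Lminus" for n
    using that QP_setD(3)[OF y] T[of n] Lminus_subset_N by fastforce
  show "rotated_cone (y (Nd p)) 1 (y (Lp p))" if "p \<in> Lplus" for p
    using QP_setD(2)[OF y that] order_trans[OF zero_le_power2] by (auto simp: rotated_cone_def)
qed

lemma piece_cone_edge:
  assumes v: "piece_cone T w v" and e: "e \<in> E" "e = {i, j}" "i \<noteq> j"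
  shows "w * v (Ed e) = v (Nd i) * v (Nd j)"
proof -
  have Ed: "v (Ed e) = of_bool (e - {p} \<subseteq> T) * v (Nd p)" if "p \<in> e \<inter> Lplus" for p
    using v e that unfolding piece_cone_def by blast
  from e show ?thesis
  proof (cases rule: edge_cases)
    case 1
    then show ?thesis
      using v e unfolding piece_cone_def by auto
  next
    case 2
    moreover have "e - {i} = {j}"
      using e by auto
    ultimately show ?thesis
      using v Ed[of i] unfolding piece_cone_def by auto
  next
    case 3
    moreover have "e - {j} = {i}"
      using e by auto
    ultimately show ?thesis
      using v Ed[of j] unfolding piece_cone_def by auto
  qed
qed

lemma QP_set_of_piece_cone:
  assumes v: "piece_cone T w v" and w: "0 < w"
  shows "(\<lambda>c. if c \<in> I then v c / w else 0) \<in> QP_set V E Lminus Lplus" (is "?y \<in> _")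
  unfolding QP_set_def mem_Collect_eq
proof (intro conjI ballI allI impI)
  have N: "?y (Nd n) = of_bool (n \<in> T)" if "n \<in> N" for n
    using v w that unfolding piece_cone_def by auto
  show "supported_on I ?y"
    unfolding supported_on_def by simp
  show "(?y (Nd p))\<^sup>2 \<le> ?y (Lp p)" if "p \<in> Lplus" for p
    using v w that Lplus_subset_V unfolding piece_cone_def by (auto intro: rotated_cone_divide)
  show "?y (Lp n) \<le> (?y (Nd n))\<^sup>2" if n: "n \<in> Lminus" for n
  proof -
    have "v (Lp n) / w \<le> of_bool (n \<in> T)"
      using v w n unfolding piece_cone_def by (simp add: pos_divide_le_eq)
    moreover have "n \<in> N"
      using n Lminus_subset_N by blast
    ultimately show ?thesis
      using n N[of n] by auto
  qed
  show "?y (Ed e) = ?y (Nd i) * ?y (Nd j)" if "e \<in> E" "e = {i, j} \<and> i \<noteq> j" for e i j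
  proof -
    have "i \<in> V" "j \<in> V"
      using that edge_subset_V by blast+
    have "?y (Ed e) = (w * v (Ed e)) / (w * w)"
      using that w by simp
    also have "\<dots> = (v (Nd i) * v (Nd j)) / (w * w)"
      using piece_cone_edge[OF v] that by simp
    also have "\<dots> = ?y (Nd i) * ?y (Nd j)"
      using \<open>i \<in> V\<close> \<open>j \<in> V\<close> by simp
    finally show ?thesis .
  qed
  show "0 \<le> ?y (Nd i)" "?y (Nd i) \<le> 1" if "i \<in> V" for i
    using v w that unfolding piece_cone_def by (cases "i \<in> Lplus"; simp)+
qed

lemma piece_cone_zero_weightD:
  assumes "piece_cone T 0 v"
  shows "\<And>i. i \<in> V \<Longrightarrow> v (Nd i) = 0" "\<And>e. e \<in> E \<Longrightarrow> v (Ed e) = 0"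
    "\<And>n. n \<in> Lminus \<Longrightarrow> v (Lp n) \<le> 0" "\<And>p. p \<in> Lplus \<Longrightarrow> 0 \<le> v (Lp p)"
proof -
  show Nd: "v (Nd i) = 0" if "i \<in> V" for i
    using assms that unfolding piece_cone_def by (cases "i \<in> Lplus") auto
  show "v (Ed e) = 0" if "e \<in> E" for e
  proof (cases "e \<inter> Lplus = {}")
    case False
    then obtain p where "p \<in> e \<inter> Lplus"
      by blast
    then show ?thesis
      using assms that Nd[of p] Lplus_subset_V unfolding piece_cone_def by auto
  qed (use assms that in \<open>auto simp: piece_cone_def\<close>)
  show "v (Lp n) \<le> 0" if "n \<in> Lminus" for n
    using assms that unfolding piece_cone_def by auto
  show "0 \<le> v (Lp p)" if "p \<in> Lplus" for p
    using assms that unfolding piece_cone_def rotated_cone_def by auto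
qed

definition lifted :: "('v coord \<Rightarrow> real) \<Rightarrow> ('v set \<Rightarrow> real) \<Rightarrow> ('v set \<Rightarrow> 'v coord \<Rightarrow> real) \<Rightarrow> bool" where
  "lifted z w v \<longleftrightarrow>
     (\<forall>T\<in>Pow N. piece_cone T (w T) (v T)) \<and> (\<Sum>T\<in>Pow N. w T) = 1 \<and>
     (\<forall>c\<in>I. z c = (\<Sum>T\<in>Pow N. v T c))"

lemma lifted_of_QP_set:
  assumes y: "y \<in> QP_set V E Lminus Lplus"
  defines "p \<equiv> prod_weight N (\<lambda>m. y (Nd m))"
  shows "lifted y p (\<lambda>T c. p T * rounded T y c)"
  unfolding lifted_def
proof (intro conjI ballI)
  fix T assume "T \<in> Pow N"
  then have "0 \<le> p T"
    unfolding p_def using QP_setD(5,6)[OF y] by (intro prod_weight_nonneg) auto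
  moreover have "piece_cone T 1 (rounded T y)"
    using rounded_in_QP_set[OF y] rounded_Nd_N by (rule piece_cone_of_QP_set)
  ultimately show "piece_cone T (p T) (\<lambda>c. p T * rounded T y c)"
    using piece_cone_scale by fastforce
next
  show "(\<Sum>T\<in>Pow N. p T) = 1"
    unfolding p_def using finite_N by (rule sum_prod_weight)
next
  show "y c = (\<Sum>T\<in>Pow N. p T * rounded T y c)" if "c \<in> I" for c
    unfolding p_def using sum_prod_weight_rounded[OF y that] by simp
qed

lemma lifted_convex_combination:
  assumes "finite F" "\<And>t. t \<in> F \<Longrightarrow> 0 \<le> l t" "(\<Sum>t\<in>F. l t) = 1"
    and lifted: "\<And>t. t \<in> F \<Longrightarrow> lifted (x t) (w t) (v t)"
  shows "lifted (\<lambda>c. \<Sum>t\<in>F. l t * x t c) (\<lambda>T. \<Sum>t\<in>F. l t * w t T) (\<lambda>T c. \<Sum>t\<in>F. l t * v t T c)"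
  unfolding lifted_def
proof (intro conjI ballI)
  show "piece_cone T (\<Sum>t\<in>F. l t * w t T) (\<lambda>c. \<Sum>t\<in>F. l t * v t T c)" if "T \<in> Pow N" for T
    using assms that unfolding lifted_def by (intro piece_cone_sum piece_cone_scale) auto
  have "(\<Sum>T\<in>Pow N. \<Sum>t\<in>F. l t * w t T) = (\<Sum>t\<in>F. l t * (\<Sum>T\<in>Pow N. w t T))"
    by (simp add: sum.swap[of _ "Pow N"] sum_distrib_left)
  also have "\<dots> = 1"
    using assms unfolding lifted_def by simp
  finally show "(\<Sum>T\<in>Pow N. \<Sum>t\<in>F. l t * w t T) = 1" .
  show "(\<Sum>t\<in>F. l t * x t c) = (\<Sum>T\<in>Pow N. \<Sum>t\<in>F. l t * v t T c)" if "c \<in> I" for c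
    using lifted that unfolding lifted_def by (simp add: sum.swap[of _ "Pow N"] sum_distrib_left)
qed

lemma QP_imp_lifted:
  assumes "z \<in> QP V E Lminus Lplus"
  shows "\<exists>w v. lifted z w v"
proof -
  obtain n :: nat and l x where lx: "\<forall>t<n. 0 \<le> l t \<and> x t \<in> QP_set V E Lminus Lplus"
    and "(\<Sum>t<n. l t) = 1" and z: "z = (\<lambda>c. \<Sum>t<n. l t * x t c)"
    using assms unfolding QP_def by (rule conv_hullE)
  then have "lifted z
      (\<lambda>T. \<Sum>t<n. l t * prod_weight N (\<lambda>m. x t (Nd m)) T)
      (\<lambda>T c. \<Sum>t<n. l t * (prod_weight N (\<lambda>m. x t (Nd m)) T * rounded T (x t) c))"
    unfolding z by (intro lifted_convex_combination lifted_of_QP_set) auto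
  then show ?thesis
    by blast
qed

lemma QP_set_add_zero_weight_pieces:
  assumes "y \<in> QP_set V E Lminus Lplus" "finite Z" "\<And>T. T \<in> Z \<Longrightarrow> piece_cone T 0 (v T)"
  shows "(\<lambda>c. y c + (if c \<in> I then \<Sum>T\<in>Z. v T c else 0)) \<in> QP_set V E Lminus Lplus"
proof (rule QP_set_add_recession[OF assms(1)])
  note zero = piece_cone_zero_weightD[OF assms(3)]
  show "supported_on I (\<lambda>c. if c \<in> I then \<Sum>T\<in>Z. v T c else 0)"
    unfolding supported_on_def by simp
  show "(if Nd i \<in> I then \<Sum>T\<in>Z. v T (Nd i) else 0) = 0" for i
    using zero(1) by simp
  show "(if Ed e \<in> I then \<Sum>T\<in>Z. v T (Ed e) else 0) = 0" for e
    using zero(2) by simp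
  show "(if Lp n \<in> I then \<Sum>T\<in>Z. v T (Lp n) else 0) \<le> 0" if "n \<in> Lminus" for n
    using zero(3) that by (auto intro: sum_nonpos)
  show "0 \<le> (if Lp p \<in> I then \<Sum>T\<in>Z. v T (Lp p) else 0)" if "p \<in> Lplus" for p
    using zero(4) that by (auto intro: sum_nonneg)
qed

lemma lifted_imp_QP:
  assumes z: "supported_on I z" and lifted: "lifted z w v"
  shows "z \<in> QP V E Lminus Lplus"
proof -
  have piece: "\<And>T. T \<in> Pow N \<Longrightarrow> piece_cone T (w T) (v T)"
    and total: "(\<Sum>T\<in>Pow N. w T) = 1" and zc: "\<And>c. c \<in> I \<Longrightarrow> z c = (\<Sum>T\<in>Pow N. v T c)"
    using lifted unfolding lifted_def by auto
  define P where "P = {T \<in> Pow N. 0 < w T}"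
  define Z where "Z = Pow N - P"
  define d where "d c = (if c \<in> I then \<Sum>T\<in>Z. v T c else 0)" for c
  define y where "y T c = (if c \<in> I then v T c / w T else 0) + d c" for T c
  have finite: "finite P" "finite Z"
    using finite_N by (simp_all add: P_def Z_def)
  have split: "Pow N = P \<union> Z" "P \<inter> Z = {}"
    by (auto simp: P_def Z_def)
  have Z0: "w T = 0" "piece_cone T 0 (v T)" if "T \<in> Z" for T
    using piece[of T] that unfolding Z_def P_def piece_cone_def by auto
  have "y T \<in> QP_set V E Lminus Lplus" if "T \<in> P" for T
    unfolding y_def d_def using that piece finite(2) Z0(2)
    by (intro QP_set_add_zero_weight_pieces QP_set_of_piece_cone) (auto simp: P_def)
  moreover have "(\<Sum>T\<in>P. w T) = 1"
    using total finite Z0(1) by (simp add: split sum.union_disjoint)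
  moreover have "z = (\<lambda>c. \<Sum>T\<in>P. w T * y T c)"
  proof
    fix c
    show "z c = (\<Sum>T\<in>P. w T * y T c)"
    proof (cases "c \<in> I")
      case True
      have "(\<Sum>T\<in>P. w T * y T c) = (\<Sum>T\<in>P. v T c) + (\<Sum>T\<in>P. w T) * d c"
        using True by (simp add: y_def P_def distrib_left sum.distrib sum_distrib_right)
      also have "\<dots> = (\<Sum>T\<in>Pow N. v T c)"
        using True finite \<open>(\<Sum>T\<in>P. w T) = 1\<close> by (simp add: d_def split sum.union_disjoint)
      finally show ?thesis
        using zc[OF True] by simp
    qed (use z in \<open>simp add: supported_on_def y_def d_def\<close>)
  qed
  ultimately show ?thesis
    unfolding QP_def using finite(1) by (auto simp: P_def intro: conv_hull_sum)
qed

lemma QP_eq_lifted: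
  "QP V E Lminus Lplus = {z. supported_on I z \<and> (\<exists>u. lifted z (\<lambda>T. u (T, None)) (\<lambda>T c. u (T, Some c)))}"
proof (intro set_eqI iffI)
  fix z assume z: "z \<in> QP V E Lminus Lplus"
  obtain w v where "lifted z w v"
    using QP_imp_lifted[OF z] by blast
  then have "lifted z (\<lambda>T. case_option (w T) (v T) None) (\<lambda>T c. case_option (w T) (v T) (Some c))"
    by simp
  moreover have "supported_on I z"
    using z unfolding QP_def by (rule conv_hull_supported_on[OF QP_setD(1), rotated])
  ultimately show "z \<in> {z. supported_on I z \<and> (\<exists>u. lifted z (\<lambda>T. u (T, None)) (\<lambda>T c. u (T, Some c)))}"
    by (auto intro!: exI[of _ "\<lambda>(T, c). case_option (w T) (v T) c"])
next
  fix z assume "z \<in> {z. supported_on I z \<and> (\<exists>u. lifted z (\<lambda>T. u (T, None)) (\<lambda>T c. u (T, Some c)))}"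
  then show "z \<in> QP V E Lminus Lplus"
    using lifted_imp_QP by blast
qed

lemma soc_describable_lifted:
  "soc_describable I (Pow N \<times> insert None (Some ` I)) (\<lambda>z u. lifted z (\<lambda>T. u (T, None)) (\<lambda>T c. u (T, Some c)))"
  unfolding lifted_def piece_cone_def
  by (intro soc_describable_intros affine_form_intros)
     (use finite_N finite_I finite_E finite_subset[OF Lplus_subset_V finite_V]
        finite_subset[OF Lminus_subset_N finite_N] Lplus_subset_V in auto)

end

theorem theorem2:
  fixes V :: "'v set" and E :: "'v set set" and Lminus Lplus :: "'v set"
  assumes "graph_with_loops V E Lminus Lplus"
    and "stable_set V E Lplus"
  shows "soc_representable (coords V E Lminus Lplus) (QP V E Lminus Lplus)"
proof -
  interpret plus_stable_graph V E Lminus Lplus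
    using assms by unfold_locales
  show ?thesis
    unfolding QP_eq_lifted
    using finite_I finite_N soc_describable_lifted by (intro soc_representable_if_describable) auto
qed

end
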